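(* Let $\mathcal{M}_0$ be the set of all probability distributions on $\mathbb{R}$ and $T:\mathcal{M}_0\to\mathcal{M}_0$. (i) $T\circ T^u=T^u\circ T$ for every increasing left-continuous $u:\mathbb{R}\to\mathbb{R}$ if and only if $T=T_d$ for some right-continuous $d\in\widehat{\mathcal{F}_D}$. (ii) $T\circ T_d=T_d\circ T$ for every right-continuous $d\in\widehat{\mathcal{F}_D}$ if and only if $T=T^u$ for some increasing left-continuous $u:\mathbb{R}\to\mathbb{R}$.
   Context: Increasing means non-decreasing. $\widehat{\mathcal{F}_D}$ is the set of increasing functions $d:[0,1]\to[0,1]$ with $d(0)=\lim_{x\downarrow0}d(x)=0$ and $d(1)=\lim_{x\uparrow1}d(x)=1$. For such $d$, $T_d:\mathcal{M}_0\to\mathcal{M}_0$ is $T_d(F)(x)=\lim_{y\downarrow x}d(F(y))$ (distributions identified with cdfs). For increasing $u$, $T^u(F)=F\circ u^{-1}$ is the distribution of $u(X)$ when $X\sim F$. *)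

theory Defs
  imports "HOL-Analysis.Analysis"
begin

text \<open>Probability distributions on the reals, identified with their cdfs.\<close>
definition M0 :: "(real \<Rightarrow> real) set" where
  "M0 = {F. mono F \<and> (\<forall>x. continuous (at_right x) F)
            \<and> (F \<longlongrightarrow> 0) at_bot \<and> (F \<longlongrightarrow> 1) at_top}"

text \<open>The class of distortion functions (values outside [0,1] are irrelevant).\<close>
definition FD_hat :: "(real \<Rightarrow> real) set" where
  "FD_hat = {d. (\<forall>x\<in>{0..1}. d x \<in> {0..1}) \<and> mono_on {0..1} d
             \<and> d 0 = 0 \<and> (d \<longlongrightarrow> 0) (at_right 0)
             \<and> d 1 = 1 \<and> (d \<longlongrightarrow> 1) (at_left 1)}"

definition right_cont_on01 :: "(real \<Rightarrow> real) \<Rightarrow> bool" where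
  "right_cont_on01 d \<longleftrightarrow> (\<forall>x\<in>{0..<1}. continuous (at_right x) d)"

definition Td :: "(real \<Rightarrow> real) \<Rightarrow> (real \<Rightarrow> real) \<Rightarrow> (real \<Rightarrow> real)" where
  "Td d F = (\<lambda>x. Lim (at_right x) (\<lambda>y. d (F y)))"

text \<open>T^u(F): cdf of u(X) where X has cdf F, i.e. x \<mapsto> P_F(u \<le> x).\<close>
definition Tu :: "(real \<Rightarrow> real) \<Rightarrow> (real \<Rightarrow> real) \<Rightarrow> (real \<Rightarrow> real)" where
  "Tu u F = (\<lambda>x. measure (interval_measure F) {y. u y \<le> x})"

definition incr_left_cont :: "(real \<Rightarrow> real) \<Rightarrow> bool" where
  "incr_left_cont u \<longleftrightarrow> mono u \<and> (\<forall>x. continuous (at_left x) u)"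

end

theory Submission
  imports Defs "HOL-Probability.Distribution_Functions" "HOL-Real_Asymp.Real_Asymp"
begin

text \<open>The operators \<open>T\<^sup>u\<close> and \<open>T\<^sub>d\<close> commute with each other, and each family is transitive
  from one reference distribution \<open>G\<close> with a continuous, strictly increasing cdf (we take the
  logistic distribution): every \<open>F\<close> equals \<open>T\<^sup>u G\<close> for \<open>u = F\<^sup>-\<^sup>1 \<circ> G\<close> and \<open>T\<^sub>d G\<close> for
  \<open>d = F \<circ> G\<^sup>-\<^sup>1\<close>. An operator commuting with one family is therefore determined by its value
  at \<open>G\<close>; that value is reached from \<open>G\<close> by a member of the other family, and commutation
  propagates the agreement at \<open>G\<close> to every distribution.\<close>

lemma commutant_of_transitive_commuting_families:
  fixes a :: "'i \<Rightarrow> 'x \<Rightarrow> 'x" and b :: "'j \<Rightarrow> 'x \<Rightarrow> 'x"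
  assumes commute: "\<And>i j F. P i \<Longrightarrow> Q j \<Longrightarrow> F \<in> S \<Longrightarrow> a i (b j F) = b j (a i F)"
    and a_closed: "\<And>i F. P i \<Longrightarrow> F \<in> S \<Longrightarrow> a i F \<in> S"
    and G: "G \<in> S"
    and a_onto: "\<And>F. F \<in> S \<Longrightarrow> \<exists>i. P i \<and> a i G = F"
    and b_onto: "\<And>F. F \<in> S \<Longrightarrow> \<exists>j. Q j \<and> b j G = F"
    and T: "\<And>F. F \<in> S \<Longrightarrow> T F \<in> S"
  shows "(\<forall>i. P i \<longrightarrow> (\<forall>F\<in>S. T (a i F) = a i (T F))) \<longleftrightarrow> (\<exists>j. Q j \<and> (\<forall>F\<in>S. T F = b j F))"
proof
  assume Ta: "\<forall>i. P i \<longrightarrow> (\<forall>F\<in>S. T (a i F) = a i (T F))"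
  obtain j where j: "Q j" "b j G = T G"
    using b_onto[OF T[OF G]] by blast
  have "T F = b j F" if F: "F \<in> S" for F
  proof -
    obtain i where i: "P i" "a i G = F"
      using a_onto[OF F] by blast
    have "T F = a i (T G)" using Ta i G by auto
    also have "\<dots> = a i (b j G)" using j by simp
    also have "\<dots> = b j F" using commute[OF i(1) j(1) G] i by simp
    finally show ?thesis .
  qed
  then show "\<exists>j. Q j \<and> (\<forall>F\<in>S. T F = b j F)" using j by blast
next
  assume "\<exists>j. Q j \<and> (\<forall>F\<in>S. T F = b j F)"
  then show "\<forall>i. P i \<longrightarrow> (\<forall>F\<in>S. T (a i F) = a i (T F))"
    using commute a_closed by auto
qed

lemma M0_D:
  assumes "F \<in> M0"
  shows "mono F" "\<And>x. continuous (at_right x) F" "(F \<longlongrightarrow> 0) at_bot" "(F \<longlongrightarrow> 1) at_top"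
  using assms by (auto simp: M0_def)

lemma M0_bounds:
  assumes "F \<in> M0"
  shows "0 \<le> F x" "F x \<le> 1"
proof -
  show "0 \<le> F x"
    using M0_D(3)[OF assms] by (rule tendsto_upperbound)
      (auto simp: eventually_at_bot_linorder intro!: exI[of _ x] monoD[OF M0_D(1)[OF assms]])
  show "F x \<le> 1"
    using M0_D(4)[OF assms] by (rule tendsto_lowerbound)
      (auto simp: eventually_at_top_linorder intro!: exI[of _ x] monoD[OF M0_D(1)[OF assms]])
qed

lemma real_distribution_interval_measure_M0:
  assumes "F \<in> M0"
  shows "real_distribution (interval_measure F)"
  using M0_D[OF assms] real_distribution_interval_measure[of F] by (auto simp: mono_def)

lemma measure_interval_measure_M0:
  assumes "F \<in> M0"
  shows "measure (interval_measure F) UNIV = 1" "measure (interval_measure F) {..x} = F x"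
proof -
  interpret real_distribution "interval_measure F"
    using real_distribution_interval_measure_M0[OF assms] .
  show "measure (interval_measure F) UNIV = 1" using prob_space by simp
  show "measure (interval_measure F) {..x} = F x"
    using M0_D[OF assms] measure_interval_measure_Iic[of F] by (auto simp: mono_def)
qed

lemma cdf_in_M0: "real_distribution M \<Longrightarrow> cdf M \<in> M0"
  unfolding M0_def
  by (auto simp: mono_def finite_borel_measure.cdf_nondecreasing finite_borel_measure.cdf_is_right_cont
      real_distribution.finite_borel_measure_M finite_borel_measure.cdf_lim_at_bot
      real_distribution.cdf_lim_at_top_prob)

lemma Tu_in_M0:
  assumes F: "F \<in> M0" and u: "mono u"
  shows "Tu u F \<in> M0"
proof -
  interpret real_distribution "interval_measure F"
    using real_distribution_interval_measure_M0[OF F] .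
  have u_meas: "u \<in> borel_measurable (interval_measure F)"
    using borel_measurable_mono[OF u] measurable_cong_sets[OF sets_interval_measure refl] by blast
  have "Tu u F = cdf (distr (interval_measure F) borel u)"
    unfolding Tu_def cdf_def by (subst measure_distr) (auto simp: u_meas vimage_def)
  then show ?thesis
    using cdf_in_M0[OF real_distribution_distr[OF u_meas]] by simp
qed

lemma FD_D:
  assumes "d \<in> FD_hat"
  shows "mono_on {0..1} d" "d 0 = 0" "d 1 = 1"
    "(d \<longlongrightarrow> 0) (at_right 0)" "(d \<longlongrightarrow> 1) (at_left 1)"
  using assms by (auto simp: FD_hat_def)

text \<open>At a point with \<open>F x = 1\<close>, \<open>d\<close> need not be right-continuous, but then \<open>F\<close> is constant
  to the right of \<open>x\<close>.\<close>
lemma tendsto_at_right_comp_M0: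
  assumes d: "right_cont_on01 d" and F: "F \<in> M0"
  shows "((\<lambda>y. d (F y)) \<longlongrightarrow> d (F x)) (at_right x)"
proof (cases "F x < 1")
  case True
  then have "continuous (at (F x) within {F x..}) d"
    using d M0_bounds[OF F, of x] by (auto simp: right_cont_on01_def at_within_Ici_at_right)
  moreover have "eventually (\<lambda>y. F y \<in> {F x..}) (at_right x)"
    using M0_D(1)[OF F] by (auto simp: eventually_at_right_field mono_def intro!: exI[of _ "x+1"])
  moreover have "(F \<longlongrightarrow> F x) (at_right x)"
    using M0_D(2)[OF F] by (simp add: continuous_within)
  ultimately show ?thesis by (rule continuous_within_tendsto_compose)
next
  case False
  have "F y = F x" if "y > x" for y
    using M0_bounds[OF F, of y] M0_bounds[OF F, of x] monoD[OF M0_D(1)[OF F], of x y] that False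
    by simp
  then have "eventually (\<lambda>y. d (F y) = d (F x)) (at_right x)"
    by (auto simp: eventually_at_right_field intro!: exI[of _ "x+1"])
  then show ?thesis by (rule tendsto_eventually)
qed

lemma Td_eq_comp:
  assumes "right_cont_on01 d" "F \<in> M0"
  shows "Td d F = (\<lambda>x. d (F x))"
  unfolding Td_def using tendsto_at_right_comp_M0[OF assms] by (intro ext tendsto_Lim) auto

lemma Td_in_M0:
  assumes d: "d \<in> FD_hat" "right_cont_on01 d" and F: "F \<in> M0"
  shows "Td d F \<in> M0"
proof -
  have "mono (\<lambda>x. d (F x))"
    using FD_D(1)[OF d(1)] M0_D(1)[OF F] M0_bounds[OF F] by (auto simp: mono_def mono_on_def)
  moreover have "continuous (at_right x) (\<lambda>x. d (F x))" for x
    using tendsto_at_right_comp_M0[OF d(2) F] by (simp add: continuous_within)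
  moreover have "((\<lambda>x. d (F x)) \<longlongrightarrow> 0) at_bot"
  proof -
    have "continuous (at 0 within {0..}) d"
      using FD_D(2,4)[OF d(1)] by (simp add: at_within_Ici_at_right continuous_within)
    then show ?thesis
      using continuous_within_tendsto_compose'[of 0 "{0..}" d F, OF _ _ M0_D(3)[OF F]]
        M0_bounds[OF F] FD_D(2)[OF d(1)] by simp
  qed
  moreover have "((\<lambda>x. d (F x)) \<longlongrightarrow> 1) at_top"
  proof -
    have "continuous (at 1 within {..1}) d"
      using FD_D(3,5)[OF d(1)] by (simp add: at_within_Iic_at_left continuous_within)
    then show ?thesis
      using continuous_within_tendsto_compose'[of 1 "{..1}" d F, OF _ _ M0_D(4)[OF F]]
        M0_bounds[OF F] FD_D(3)[OF d(1)] by simp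
  qed
  ultimately show ?thesis using Td_eq_comp[OF d(2) F] by (simp add: M0_def)
qed

lemma sublevel_set_cases:
  assumes "incr_left_cont u"
  obtains "{y. u y \<le> x} = {}" | "{y. u y \<le> x} = UNIV" | a where "{y. u y \<le> x} = {..a}"
proof -
  let ?S = "{y. u y \<le> x}"
  have m: "mono u" and lc: "\<And>y. continuous (at_left y) u"
    using assms by (auto simp: incr_left_cont_def)
  consider "?S = {}" | "?S = UNIV" | "?S \<noteq> {}" "?S \<noteq> UNIV" by blast
  then show ?thesis
  proof cases
    case 3
    from 3(2) obtain z where "z \<notin> ?S" by blast
    then have z: "x < u z" by simp
    have "s \<le> z" if "s \<in> ?S" for s
      using that z monoD[OF m, of z s] by (cases "s \<le> z") auto
    then have bdd: "bdd_above ?S" by (auto simp: bdd_above_def)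
    define a where "a = Sup ?S"
    have below: "y \<in> ?S" if "y < a" for y
    proof -
      obtain s where "s \<in> ?S" "y < s" using \<open>y < a\<close> 3 bdd by (auto simp: a_def less_cSup_iff)
      then show ?thesis using monoD[OF m, of y s] by auto
    qed
    have "u a \<le> x"
    proof (rule tendsto_upperbound)
      show "(u \<longlongrightarrow> u a) (at_left a)" using lc[of a] by (simp add: continuous_within)
      show "eventually (\<lambda>y. u y \<le> x) (at_left a)"
        using below by (auto simp: eventually_at_left_field intro!: exI[of _ "a - 1"])
    qed simp
    then have "?S = {..a}"
      using below bdd cSup_upper[of _ ?S] by (force simp: a_def)
    then show ?thesis by (rule that(3))
  qed (use that in auto)
qed

lemma Td_Tu_commute:
  assumes d: "d \<in> FD_hat" "right_cont_on01 d" and u: "incr_left_cont u" and F: "F \<in> M0"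
  shows "Td d (Tu u F) = Tu u (Td d F)"
proof
  fix x
  have TuF: "Tu u F \<in> M0" using Tu_in_M0[OF F] u by (simp add: incr_left_cont_def)
  have TdF: "Td d F \<in> M0" using Td_in_M0[OF d F] .
  have "Td d (Tu u F) x = d (measure (interval_measure F) {y. u y \<le> x})"
    using Td_eq_comp[OF d(2) TuF] by (simp add: Tu_def)
  also have "\<dots> = measure (interval_measure (Td d F)) {y. u y \<le> x}"
    using sublevel_set_cases[OF u, of x] measure_interval_measure_M0[OF F]
      measure_interval_measure_M0[OF TdF] FD_D(2,3)[OF d(1)] Td_eq_comp[OF d(2) F]
    by cases auto
  finally show "Td d (Tu u F) x = Tu u (Td d F) x" by (simp add: Tu_def)
qed

definition logistic :: "real \<Rightarrow> real" where
  "logistic x = exp x / (1 + exp x)"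

definition logit :: "real \<Rightarrow> real" where
  "logit t = ln (t / (1 - t))"

lemma one_plus_exp_neq_zero [simp]: "1 + exp (x::real) \<noteq> 0"
  using exp_gt_zero[of x] by linarith

lemma logistic_bounds: "0 < logistic x" "logistic x < 1"
  by (auto simp: logistic_def add_pos_pos)

lemma logistic_less_iff: "logistic x < logistic y \<longleftrightarrow> x < y"
  using exp_gt_zero[of x] exp_gt_zero[of y]
  by (simp add: logistic_def divide_less_eq less_divide_eq field_simps add_pos_pos)

lemma logistic_le_iff: "logistic x \<le> logistic y \<longleftrightarrow> x \<le> y"
  using logistic_less_iff by (meson not_le)

lemma logistic_logit: "t \<in> {0<..<1} \<Longrightarrow> logistic (logit t) = t"
  by (simp add: logistic_def logit_def field_simps)

lemma logit_logistic: "logit (logistic x) = x"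
proof -
  have "1 - logistic x = 1 / (1 + exp x)" by (simp add: logistic_def field_simps)
  then show ?thesis by (simp add: logit_def logistic_def)
qed

lemma logit_less_iff:
  assumes "s \<in> {0<..<1}" "t \<in> {0<..<1}"
  shows "logit s < logit t \<longleftrightarrow> s < t"
  using logistic_less_iff[of "logit s" "logit t"] assms by (simp add: logistic_logit)

lemma isCont_logit: "t \<in> {0<..<1} \<Longrightarrow> isCont logit t"
  unfolding logit_def by (intro continuous_intros) auto

lemma filterlim_logit_at_right_0: "filterlim logit at_bot (at_right 0)"
  unfolding logit_def by real_asymp

lemma filterlim_logit_at_left_1: "filterlim logit at_top (at_left 1)"
  unfolding logit_def by real_asymp

lemma continuous_logistic: "continuous_on UNIV logistic"
  unfolding logistic_def by (intro continuous_intros) simp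

lemma logistic_in_M0: "logistic \<in> M0"
proof -
  have "mono logistic" by (simp add: mono_def logistic_le_iff)
  moreover have "continuous (at_right x) logistic" for x
    using continuous_logistic by (simp add: continuous_on_eq_continuous_within continuous_at_imp_continuous_at_within)
  moreover have "(logistic \<longlongrightarrow> 0) at_bot" "(logistic \<longlongrightarrow> 1) at_top"
    unfolding logistic_def by real_asymp+
  ultimately show ?thesis by (simp add: M0_def)
qed

lemma measure_logistic_sublevel:
  assumes "t \<in> {0..1}"
  shows "measure (interval_measure logistic) {y. logistic y \<le> t} = t"
proof -
  consider "t = 0" | "t = 1" | "t \<in> {0<..<1}" using assms by fastforce
  then show ?thesis
  proof cases
    case 1
    then have "{y. logistic y \<le> t} = {}" using logistic_bounds(1) by (auto simp: not_le)
    then show ?thesis using 1 by simp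
  next
    case 2
    then have "{y. logistic y \<le> t} = UNIV" using logistic_bounds(2) by (auto intro: less_imp_le)
    then show ?thesis using 2 measure_interval_measure_M0(1)[OF logistic_in_M0] by simp
  next
    case 3
    then have "{y. logistic y \<le> t} = {..logit t}"
      using logistic_le_iff[of _ "logit t"] by (auto simp: logistic_logit)
    then show ?thesis using 3 measure_interval_measure_M0(2)[OF logistic_in_M0] by (simp add: logistic_logit)
  qed
qed

definition quantile :: "(real \<Rightarrow> real) \<Rightarrow> real \<Rightarrow> real" where
  "quantile F t = Inf {x. t \<le> F x}"

lemma quantile_le_iff:
  assumes F: "F \<in> M0" and t: "t \<in> {0<..<1}"
  shows "quantile F t \<le> x \<longleftrightarrow> t \<le> F x"
proof -
  let ?A = "{x. t \<le> F x}"
  have m: "mono F" using M0_D[OF F] by simp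
  have "eventually (\<lambda>x. t < F x) at_top"
    using M0_D(4)[OF F] t by (simp add: order_tendsto_iff)
  then have ne: "?A \<noteq> {}" by (auto simp: eventually_at_top_linorder intro: less_imp_le)
  have "eventually (\<lambda>x. F x < t) at_bot"
    using M0_D(3)[OF F] t by (simp add: order_tendsto_iff)
  then obtain b where b: "\<And>x. x \<le> b \<Longrightarrow> F x < t" by (auto simp: eventually_at_bot_linorder)
  have "b \<le> x" if "t \<le> F x" for x
    using b[of x] that by (cases "x \<le> b") auto
  then have bdd: "bdd_below ?A" by (meson bdd_belowI mem_Collect_eq)
  have "t \<le> F (quantile F t)"
  proof (rule tendsto_lowerbound)
    show "(F \<longlongrightarrow> F (quantile F t)) (at_right (quantile F t))"
      using M0_D(2)[OF F] by (simp add: continuous_within)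
    have "t \<le> F y" if y: "y > quantile F t" for y
    proof -
      obtain a where "a \<in> ?A" "a < y"
        using y ne bdd by (auto simp: quantile_def cInf_less_iff)
      then show ?thesis using monoD[OF m, of a y] by auto
    qed
    then show "eventually (\<lambda>y. t \<le> F y) (at_right (quantile F t))"
      by (auto simp: eventually_at_right_field intro!: exI[of _ "quantile F t + 1"])
  qed simp
  then show ?thesis
    using monoD[OF m, of "quantile F t" x] bdd by (auto simp: quantile_def intro: cInf_lower)
qed

lemma continuous_at_left_if_closed_sublevels:
  fixes u :: "real \<Rightarrow> real"
  assumes m: "mono u" and closed: "\<And>x. closed {y. u y \<le> x}"
  shows "continuous (at_left y) u"
  unfolding continuous_within
proof (rule order_tendstoI)
  fix a assume "u y < a"
  then have "u z < a" if "z < y" for z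
    using monoD[OF m, of z y] that by simp
  then show "eventually (\<lambda>z. u z < a) (at_left y)"
    by (auto simp: eventually_at_left_field intro!: exI[of _ "y - 1"])
next
  fix a assume a: "a < u y"
  have "\<exists>z<y. a < u z"
  proof (rule ccontr)
    assume "\<not> ?thesis"
    then have "{..<y} \<subseteq> {z. u z \<le> a}"
      by (auto simp: not_less) (meson not_le)
    then have "closure {..<y} \<subseteq> {z. u z \<le> a}"
      using closed by (rule closure_minimal)
    then show False using a by (auto simp: closure_lessThan)
  qed
  then obtain z where "z < y" "a < u z" by auto
  then show "eventually (\<lambda>z. a < u z) (at_left y)"
    using monoD[OF m] by (auto simp: eventually_at_left_field intro!: exI[of _ z] intro: less_le_trans)
qed

lemma Tu_logistic_onto:
  assumes F: "F \<in> M0"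
  shows "\<exists>u. incr_left_cont u \<and> Tu u logistic = F"
proof -
  define u where "u y = quantile F (logistic y)" for y
  have galois: "u y \<le> x \<longleftrightarrow> logistic y \<le> F x" for x y
    unfolding u_def using quantile_le_iff[OF F] logistic_bounds by simp
  have "mono u"
  proof
    fix y y' :: real assume "y \<le> y'"
    then have "logistic y \<le> F (u y')"
      using galois[of y' "u y'"] logistic_le_iff[of y y'] by simp
    then show "u y \<le> u y'" using galois by simp
  qed
  moreover have "closed {y. u y \<le> x}" for x
    unfolding galois by (rule closed_Collect_le[OF continuous_logistic continuous_on_const])
  ultimately have "incr_left_cont u"
    unfolding incr_left_cont_def using continuous_at_left_if_closed_sublevels by blast
  moreover have "Tu u logistic = F"
    unfolding Tu_def galois using M0_bounds[OF F] by (simp add: measure_logistic_sublevel)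
  ultimately show ?thesis by blast
qed

lemma Td_logistic_onto:
  assumes F: "F \<in> M0"
  shows "\<exists>d. (d \<in> FD_hat \<and> right_cont_on01 d) \<and> Td d logistic = F"
proof -
  define d where "d t = (if t \<le> 0 then 0 else if 1 \<le> t then 1 else F (logit t))" for t
  have d_eq: "d t = F (logit t)" if "t \<in> {0<..<1}" for t
    using that by (simp add: d_def)
  have "mono_on {0..1} d"
  proof (rule mono_onI)
    fix s t :: real assume st: "s \<in> {0..1}" "t \<in> {0..1}" "s \<le> t"
    consider "s = 0" | "t = 1" | "s \<in> {0<..<1}" "t \<in> {0<..<1}" using st by fastforce
    then show "d s \<le> d t"
    proof cases
      case 3
      then have "logit s \<le> logit t" using logit_less_iff[OF 3] st(3) by (cases "s = t") auto
      then show ?thesis using 3 d_eq monoD[OF M0_D(1)[OF F]] by simp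
    qed (use st M0_bounds[OF F] in \<open>auto simp: d_def\<close>)
  qed
  moreover have lim0: "(d \<longlongrightarrow> 0) (at_right 0)"
  proof (rule Lim_transform_eventually)
    show "((\<lambda>t. F (logit t)) \<longlongrightarrow> 0) (at_right 0)"
      using filterlim_compose[OF M0_D(3)[OF F] filterlim_logit_at_right_0] .
    show "eventually (\<lambda>t. F (logit t) = d t) (at_right 0)"
      using d_eq by (auto simp: eventually_at_right_field intro!: exI[of _ 1])
  qed
  moreover have "(d \<longlongrightarrow> 1) (at_left 1)"
  proof (rule Lim_transform_eventually)
    show "((\<lambda>t. F (logit t)) \<longlongrightarrow> 1) (at_left 1)"
      using filterlim_compose[OF M0_D(4)[OF F] filterlim_logit_at_left_1] .
    show "eventually (\<lambda>t. F (logit t) = d t) (at_left 1)"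
      using d_eq by (auto simp: eventually_at_left_field intro!: exI[of _ 0])
  qed
  ultimately have FD: "d \<in> FD_hat"
    unfolding FD_hat_def using M0_bounds[OF F] by (auto simp: d_def)
  have "continuous (at_right t) d" if "t \<in> {0<..<1}" for t
  proof -
    have "continuous (at (logit t) within {logit t<..}) F" using M0_D(2)[OF F] .
    moreover have "eventually (\<lambda>s. logit s \<in> {logit t<..}) (at_right t)"
      using that logit_less_iff[OF that] by (auto simp: eventually_at_right_field intro!: exI[of _ 1])
    moreover have "(logit \<longlongrightarrow> logit t) (at_right t)"
      using isCont_logit[OF that] by (simp add: isCont_def filterlim_at_split)
    ultimately have "((\<lambda>s. F (logit s)) \<longlongrightarrow> F (logit t)) (at_right t)"
      by (rule continuous_within_tendsto_compose)
    moreover have "eventually (\<lambda>s. F (logit s) = d s) (at_right t)"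
      using that d_eq by (auto simp: eventually_at_right_field intro!: exI[of _ 1])
    ultimately show ?thesis
      using that d_eq by (simp add: continuous_within Lim_transform_eventually)
  qed
  then have rc: "right_cont_on01 d"
    using lim0 by (force simp: right_cont_on01_def continuous_within d_def)
  have "Td d logistic = F"
    using Td_eq_comp[OF rc logistic_in_M0] logistic_bounds by (simp add: d_eq logit_logistic)
  then show ?thesis using FD rc by blast
qed

theorem proposition5:
  fixes T :: "(real \<Rightarrow> real) \<Rightarrow> (real \<Rightarrow> real)"
  assumes "\<forall>F\<in>M0. T F \<in> M0"
  shows "((\<forall>u. incr_left_cont u \<longrightarrow> (\<forall>F\<in>M0. T (Tu u F) = Tu u (T F)))
           \<longleftrightarrow> (\<exists>d\<in>FD_hat. right_cont_on01 d \<and> (\<forall>F\<in>M0. T F = Td d F)))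
     \<and> ((\<forall>d\<in>FD_hat. right_cont_on01 d \<longrightarrow> (\<forall>F\<in>M0. T (Td d F) = Td d (T F)))
           \<longleftrightarrow> (\<exists>u. incr_left_cont u \<and> (\<forall>F\<in>M0. T F = Tu u F)))"
proof -
  let ?D = "\<lambda>d. d \<in> FD_hat \<and> right_cont_on01 d"
  have Tu_closed: "Tu u F \<in> M0" if "incr_left_cont u" "F \<in> M0" for u F
    using Tu_in_M0 that by (simp add: incr_left_cont_def)
  have Td_closed: "Td d F \<in> M0" if "?D d" "F \<in> M0" for d F
    using Td_in_M0 that by blast
  have T: "T F \<in> M0" if "F \<in> M0" for F
    using assms that by blast
  have "(\<forall>u. incr_left_cont u \<longrightarrow> (\<forall>F\<in>M0. T (Tu u F) = Tu u (T F)))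
          \<longleftrightarrow> (\<exists>d. ?D d \<and> (\<forall>F\<in>M0. T F = Td d F))"
    by (rule commutant_of_transitive_commuting_families[where P = incr_left_cont and Q = ?D
          and a = Tu and b = Td and S = M0 and G = logistic])
      (use Tu_closed Tu_logistic_onto Td_logistic_onto T Td_Tu_commute logistic_in_M0 in simp_all)
  moreover have "(\<forall>d. ?D d \<longrightarrow> (\<forall>F\<in>M0. T (Td d F) = Td d (T F)))
          \<longleftrightarrow> (\<exists>u. incr_left_cont u \<and> (\<forall>F\<in>M0. T F = Tu u F))"
    by (rule commutant_of_transitive_commuting_families[where P = ?D and Q = incr_left_cont
          and a = Td and b = Tu and S = M0 and G = logistic])
      (use Td_closed Td_logistic_onto Tu_logistic_onto T Td_Tu_commute logistic_in_M0 in simp_all)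
  ultimately show ?thesis by blast
qed

end
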